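(* Let $R$ be a partially colored tree (a trunk) in which every colored vertex is a leaf, with at most one colored vertex and with $|V(R)|\le 7$. Then Alice can win the $3$-Modified Coloring Game on $R$.
   Context: A partial coloring assigns to some vertices colors from a set of $3$ colors so that adjacent colored vertices get different colors; a color is legal for an uncolored vertex $v$ if no neighbor of $v$ has that color. The $k$-Modified Coloring Game ($k$-MCG) on a partially colored graph: Bob and Alice alternate turns, Bob first, each turn coloring an uncolored vertex with a legal color from a set of $k$ colors, except that Bob may choose to pass on any of his turns. Bob wins if at some point an uncolored vertex has no legal color; Alice wins if every vertex becomes colored. A trunk of a partially colored forest $F$ is a maximal connected subgraph of $F$ in which every colored vertex is a leaf. *)

theory Defs
  imports Main
begin

text \<open>A partial coloring is a map col :: 'a => nat option
(None = uncolored).\<close>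

definition simple_graph :: "'a set \<Rightarrow> ('a \<Rightarrow> 'a \<Rightarrow> bool) \<Rightarrow> bool" where
  "simple_graph V E \<longleftrightarrow> finite V \<and> (\<forall>u v. E u v \<longrightarrow> u \<in> V \<and> v \<in> V)
     \<and> (\<forall>u v. E u v \<longrightarrow> E v u) \<and> (\<forall>v. \<not> E v v)"

definition connected_graph :: "'a set \<Rightarrow> ('a \<Rightarrow> 'a \<Rightarrow> bool) \<Rightarrow> bool" where
  "connected_graph V E \<longleftrightarrow> (\<forall>u\<in>V. \<forall>v\<in>V. E\<^sup>*\<^sup>* u v)"

definition is_cycle :: "('a \<Rightarrow> 'a \<Rightarrow> bool) \<Rightarrow> 'a list \<Rightarrow> bool" where
  "is_cycle E cs \<longleftrightarrow> length cs \<ge> 3 \<and> distinct cs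
     \<and> (\<forall>i. Suc i < length cs \<longrightarrow> E (cs ! i) (cs ! Suc i)) \<and> E (last cs) (hd cs)"

definition is_tree :: "'a set \<Rightarrow> ('a \<Rightarrow> 'a \<Rightarrow> bool) \<Rightarrow> bool" where
  "is_tree V E \<longleftrightarrow> simple_graph V E \<and> V \<noteq> {} \<and> connected_graph V E
     \<and> \<not> (\<exists>cs. is_cycle E cs)"

definition degree :: "'a set \<Rightarrow> ('a \<Rightarrow> 'a \<Rightarrow> bool) \<Rightarrow> 'a \<Rightarrow> nat" where
  "degree V E v = card {u \<in> V. E u v}"

definition is_leaf :: "'a set \<Rightarrow> ('a \<Rightarrow> 'a \<Rightarrow> bool) \<Rightarrow> 'a \<Rightarrow> bool" where
  "is_leaf V E v \<longleftrightarrow> degree V E v = 1"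

definition partial_coloring :: "nat \<Rightarrow> 'a set \<Rightarrow> ('a \<Rightarrow> 'a \<Rightarrow> bool) \<Rightarrow> ('a \<Rightarrow> nat option) \<Rightarrow> bool" where
  "partial_coloring k V E col \<longleftrightarrow>
     (\<forall>v c. col v = Some c \<longrightarrow> v \<in> V \<and> c < k)
     \<and> (\<forall>u v c d. E u v \<longrightarrow> col u = Some c \<longrightarrow> col v = Some d \<longrightarrow> c \<noteq> d)"

definition colored_vertices :: "'a set \<Rightarrow> ('a \<Rightarrow> nat option) \<Rightarrow> 'a set" where
  "colored_vertices V col = {v \<in> V. col v \<noteq> None}"

definition legal :: "nat \<Rightarrow> ('a \<Rightarrow> 'a \<Rightarrow> bool) \<Rightarrow> ('a \<Rightarrow> nat option) \<Rightarrow> 'a \<Rightarrow> nat \<Rightarrow> bool" where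
  "legal k E col v c \<longleftrightarrow> c < k \<and> (\<forall>u. E u v \<longrightarrow> col u \<noteq> Some c)"

text \<open>Bob has won: some uncolored vertex has no legal color.\<close>
definition stuck :: "nat \<Rightarrow> 'a set \<Rightarrow> ('a \<Rightarrow> 'a \<Rightarrow> bool) \<Rightarrow> ('a \<Rightarrow> nat option) \<Rightarrow> bool" where
  "stuck k V E col \<longleftrightarrow> (\<exists>v\<in>V. col v = None \<and> \<not> (\<exists>c. legal k E col v c))"

definition complete :: "'a set \<Rightarrow> ('a \<Rightarrow> nat option) \<Rightarrow> bool" where
  "complete V col \<longleftrightarrow> (\<forall>v\<in>V. col v \<noteq> None)"

text \<open>k-Modified Coloring Game. alice_wins_bob_turn k V E col: from position col with Bob
to move, Alice has a strategy guaranteeing that every vertex becomes colored (in finitely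
many moves) without an uncolored vertex ever lacking a legal color. Bob may pass; Alice
may not. Defined as the least fixed point (winning in finitely many rounds; the game is
finite anyway, since every two consecutive turns color at least one vertex).\<close>
inductive alice_wins_bob_turn :: "nat \<Rightarrow> 'a set \<Rightarrow> ('a \<Rightarrow> 'a \<Rightarrow> bool) \<Rightarrow> ('a \<Rightarrow> nat option) \<Rightarrow> bool"
  and alice_wins_alice_turn :: "nat \<Rightarrow> 'a set \<Rightarrow> ('a \<Rightarrow> 'a \<Rightarrow> bool) \<Rightarrow> ('a \<Rightarrow> nat option) \<Rightarrow> bool"
  for k V E where
  bob_done: "complete V col \<Longrightarrow> alice_wins_bob_turn k V E col"
| bob_move: "\<lbrakk> \<not> complete V col; \<not> stuck k V E col;
     alice_wins_alice_turn k V E col;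
     \<And>v c. v \<in> V \<Longrightarrow> col v = None \<Longrightarrow> legal k E col v c \<Longrightarrow>
        alice_wins_alice_turn k V E (col(v := Some c)) \<rbrakk>
   \<Longrightarrow> alice_wins_bob_turn k V E col"
| alice_done: "complete V col \<Longrightarrow> alice_wins_alice_turn k V E col"
| alice_move: "\<lbrakk> \<not> complete V col; \<not> stuck k V E col; v \<in> V; col v = None; legal k E col v c;
     alice_wins_bob_turn k V E (col(v := Some c)) \<rbrakk>
   \<Longrightarrow> alice_wins_alice_turn k V E col"

definition alice_wins_MCG :: "nat \<Rightarrow> 'a set \<Rightarrow> ('a \<Rightarrow> 'a \<Rightarrow> bool) \<Rightarrow> ('a \<Rightarrow> nat option) \<Rightarrow> bool" where
  "alice_wins_MCG k V E col \<longleftrightarrow> alice_wins_bob_turn k V E col"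

end

theory Submission
  imports Defs
begin

text \<open>Call a vertex safe if it is colored, or if the colors it sees plus its uncolored
neighbours number at most 2. A safe vertex can never be left without a legal color, so once
every vertex is safe Alice wins by playing arbitrarily, and an unsafe vertex has degree at
least 3. A tree has no 3- or 4-cycles, so counting closed neighbourhoods shows that a tree
on at most 7 vertices has at most two vertices of degree \<open>\<ge> 3\<close>, and if it has two, one of
them has degree exactly 3. After Bob's first move at most two vertices are colored, and a short
case analysis gives Alice a move after which at most one vertex \<open>b\<close> is unsafe and \<open>b\<close> sees at
most one color; she colors \<open>b\<close> on her next turn unless Bob already has, and all vertices are
safe.\<close>

definition seen_colors :: "('a \<Rightarrow> 'a \<Rightarrow> bool) \<Rightarrow> ('a \<Rightarrow> nat option) \<Rightarrow> 'a \<Rightarrow> nat set" where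
  "seen_colors E col v = {c. \<exists>u. E u v \<and> col u = Some c}"

definition colored_nbrs :: "('a \<Rightarrow> 'a \<Rightarrow> bool) \<Rightarrow> ('a \<Rightarrow> nat option) \<Rightarrow> 'a \<Rightarrow> 'a set" where
  "colored_nbrs E col v = {u. E u v \<and> col u \<noteq> None}"

definition uncolored_nbrs :: "('a \<Rightarrow> 'a \<Rightarrow> bool) \<Rightarrow> ('a \<Rightarrow> nat option) \<Rightarrow> 'a \<Rightarrow> 'a set" where
  "uncolored_nbrs E col v = {u. E u v \<and> col u = None}"

text \<open>A move adds a seen color to a vertex only by coloring one of its uncolored neighbours,
so the sum never increases and a safe vertex always keeps a legal color among 3.\<close>
definition safe :: "('a \<Rightarrow> 'a \<Rightarrow> bool) \<Rightarrow> ('a \<Rightarrow> nat option) \<Rightarrow> 'a \<Rightarrow> bool" where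
  "safe E col v \<longleftrightarrow> col v \<noteq> None \<or> card (seen_colors E col v) + card (uncolored_nbrs E col v) \<le> 2"

lemma card_subset_singleton_le: "A \<subseteq> {a} \<Longrightarrow> card A \<le> 1"
  using card_mono[of "{a}" A] by simp

lemma seen_colors_fun_upd:
  "col w = None \<Longrightarrow> seen_colors E (col(w := Some c)) v =
     (if E w v then insert c (seen_colors E col v) else seen_colors E col v)"
  unfolding seen_colors_def by (auto, metis option.distinct(1))

lemma uncolored_nbrs_fun_upd: "uncolored_nbrs E (col(w := Some c)) v = uncolored_nbrs E col v - {w}"
  by (auto simp: uncolored_nbrs_def)

lemma seen_colors_eq_image: "seen_colors E col v = (the \<circ> col) ` colored_nbrs E col v"
  by (force simp: seen_colors_def colored_nbrs_def)

lemma legal_color_exists: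
  assumes "finite (seen_colors E col v)" "card (seen_colors E col v) \<le> 2"
  shows "\<exists>c. legal 3 E col v c"
proof -
  have "\<not> {0, 1, 2} \<subseteq> seen_colors E col v"
    using card_mono[OF assms(1), of "{0, 1, 2}"] assms(2) by auto
  then obtain c where "c \<in> {0, 1, 2}" "c \<notin> seen_colors E col v" by blast
  then have "legal 3 E col v c" by (auto simp: legal_def seen_colors_def)
  then show ?thesis ..
qed

lemma card_Un_Int_3:
  assumes "finite A" "finite B" "finite C"
  shows "card (A \<union> B \<union> C) + card (A \<inter> B) + card (A \<inter> C) + card (B \<inter> C)
         = card A + card B + card C + card (A \<inter> B \<inter> C)"
proof -
  have "card (A \<union> B) + card (A \<inter> B) = card A + card B"
    using card_Un_Int[of A B] assms by simp
  moreover have "card (A \<union> B \<union> C) + card ((A \<inter> C) \<union> (B \<inter> C)) = card (A \<union> B) + card C"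
    using card_Un_Int[of "A \<union> B" C] assms by (simp add: Int_Un_distrib2)
  moreover have "card ((A \<inter> C) \<union> (B \<inter> C)) + card (A \<inter> B \<inter> C) = card (A \<inter> C) + card (B \<inter> C)"
    using card_Un_Int[of "A \<inter> C" "B \<inter> C"] assms by (simp add: Int_ac)
  ultimately show ?thesis by simp
qed

locale sgraph =
  fixes V :: "'a set" and E :: "'a \<Rightarrow> 'a \<Rightarrow> bool"
  assumes simple: "simple_graph V E"
begin

lemma finite_V: "finite V"
  using simple by (simp add: simple_graph_def)

lemma edge_in_V: "E u v \<Longrightarrow> u \<in> V \<and> v \<in> V"
  using simple by (simp add: simple_graph_def)

lemma edge_sym: "E u v \<Longrightarrow> E v u"
  using simple by (simp add: simple_graph_def)

lemma edge_irrefl: "\<not> E v v"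
  using simple by (simp add: simple_graph_def)

lemma finite_nbhd: "finite {u. E u v}"
  by (rule finite_subset[OF _ finite_V]) (auto dest: edge_in_V)

lemma finite_colored_nbrs: "finite (colored_nbrs E col v)"
  using finite_nbhd by (rule rev_finite_subset) (auto simp: colored_nbrs_def)

lemma finite_uncolored_nbrs: "finite (uncolored_nbrs E col v)"
  using finite_nbhd by (rule rev_finite_subset) (auto simp: uncolored_nbrs_def)

lemma finite_seen_colors: "finite (seen_colors E col v)"
  using finite_colored_nbrs by (simp add: seen_colors_eq_image)

lemma card_seen_colors_le: "card (seen_colors E col v) \<le> card (colored_nbrs E col v)"
  unfolding seen_colors_eq_image by (rule card_image_le[OF finite_colored_nbrs])

lemma colored_nbrs_subset: "colored_nbrs E col v \<subseteq> colored_vertices V col"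
  by (auto simp: colored_nbrs_def colored_vertices_def dest: edge_in_V)

lemma finite_colored_vertices: "finite (colored_vertices V col)"
  using finite_V by (simp add: colored_vertices_def)

lemma card_seen_colors_le_colored_vertices:
  "card (seen_colors E col v) \<le> card (colored_vertices V col)"
  using card_seen_colors_le card_mono[OF finite_colored_vertices colored_nbrs_subset] le_trans
  by blast

lemma degree_eq: "degree V E v = card {u. E u v}"
  unfolding degree_def by (metis (lifting) edge_in_V)

lemma degree_eq_colored_uncolored:
  "degree V E v = card (colored_nbrs E col v) + card (uncolored_nbrs E col v)"
proof -
  have "{u. E u v} = colored_nbrs E col v \<union> uncolored_nbrs E col v"
    and "colored_nbrs E col v \<inter> uncolored_nbrs E col v = {}"
    by (auto simp: colored_nbrs_def uncolored_nbrs_def)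
  then show ?thesis
    by (simp add: degree_eq card_Un_disjoint finite_colored_nbrs finite_uncolored_nbrs)
qed

lemma unsafe_imp_degree_ge_3:
  assumes "\<not> safe E col v" shows "col v = None" "3 \<le> degree V E v"
  using assms card_seen_colors_le[of col v] degree_eq_colored_uncolored[of v col]
  by (auto simp: safe_def)

lemma safe_fun_upd:
  assumes "safe E col v" "col w = None"
  shows "safe E (col(w := Some c)) v"
proof (cases "col v = None \<and> v \<noteq> w")
  case True
  then have bound: "card (seen_colors E col v) + card (uncolored_nbrs E col v) \<le> 2"
    using assms(1) by (simp add: safe_def)
  show ?thesis
  proof (cases "E w v")
    case True
    then have "w \<in> uncolored_nbrs E col v"
      using assms(2) by (simp add: uncolored_nbrs_def)
    then have "card (uncolored_nbrs E (col(w := Some c)) v) + 1 = card (uncolored_nbrs E col v)"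
      using card_Suc_Diff1[OF finite_uncolored_nbrs] by (simp add: uncolored_nbrs_fun_upd)
    moreover have "card (seen_colors E (col(w := Some c)) v) \<le> card (seen_colors E col v) + 1"
      using True assms(2) finite_seen_colors
      by (simp add: seen_colors_fun_upd card_insert_if)
    ultimately show ?thesis
      using bound by (simp add: safe_def)
  next
    case False
    then have "uncolored_nbrs E (col(w := Some c)) v = uncolored_nbrs E col v"
      by (auto simp: uncolored_nbrs_def)
    then show ?thesis
      using False True bound assms(2) by (simp add: safe_def seen_colors_fun_upd)
  qed
qed (auto simp: safe_def)

lemma all_safe_fun_upd:
  assumes "\<forall>v\<in>V. v \<noteq> w \<longrightarrow> safe E col v" "col w = None"
  shows "\<forall>v\<in>V. safe E (col(w := Some c)) v"
proof
  fix v assume "v \<in> V"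
  show "safe E (col(w := Some c)) v"
  proof (cases "v = w")
    case False
    then show ?thesis using assms \<open>v \<in> V\<close> by (simp add: safe_fun_upd)
  qed (simp add: safe_def)
qed

lemma not_stuck_if_seen_colors_le_2:
  "\<forall>v\<in>V. col v = None \<longrightarrow> card (seen_colors E col v) \<le> 2 \<Longrightarrow> \<not> stuck 3 V E col"
  unfolding stuck_def using legal_color_exists[OF finite_seen_colors] by blast

lemma not_stuck_if_colored_vertices_le_2:
  "card (colored_vertices V col) \<le> 2 \<Longrightarrow> \<not> stuck 3 V E col"
  using card_seen_colors_le_colored_vertices le_trans
  by (metis not_stuck_if_seen_colors_le_2)

lemma not_stuck_if_all_safe_but: "\<forall>v\<in>V. v \<noteq> b \<longrightarrow> safe E col v \<Longrightarrow>
    card (seen_colors E col b) \<le> 2 \<Longrightarrow> \<not> stuck 3 V E col"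
  by (rule not_stuck_if_seen_colors_le_2) (auto simp: safe_def)

lemma alice_wins_if_all_safe:
  "\<forall>v\<in>V. safe E col v \<Longrightarrow> alice_wins_alice_turn 3 V E col \<and> alice_wins_bob_turn 3 V E col"
proof (induction "card {v\<in>V. col v = None}" arbitrary: col rule: less_induct)
  case less
  have IH: "alice_wins_alice_turn 3 V E (col(w := Some c)) \<and> alice_wins_bob_turn 3 V E (col(w := Some c))"
    if "w \<in> V" "col w = None" for w c
  proof (rule less.hyps)
    have "{v\<in>V. (col(w := Some c)) v = None} = {v\<in>V. col v = None} - {w}" by auto
    then show "card {v\<in>V. (col(w := Some c)) v = None} < card {v\<in>V. col v = None}"
      using that finite_V by (simp add: card_Diff1_less del: card_Diff_insert)
    show "\<forall>v\<in>V. safe E (col(w := Some c)) v"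
      using less.prems safe_fun_upd that(2) by blast
  qed
  have not_stuck: "\<not> stuck 3 V E col"
    using less.prems by (intro not_stuck_if_seen_colors_le_2) (auto simp: safe_def)
  have alice: "alice_wins_alice_turn 3 V E col"
  proof (cases "complete V col")
    case False
    then obtain w where w: "w \<in> V" "col w = None" by (auto simp: complete_def)
    then obtain c where "legal 3 E col w c"
      using less.prems legal_color_exists[OF finite_seen_colors] by (force simp: safe_def)
    then show ?thesis
      using alice_move[OF False not_stuck w] IH[OF w] by blast
  qed (rule alice_done)
  have "alice_wins_bob_turn 3 V E col"
  proof (cases "complete V col")
    case False
    then show ?thesis
      using bob_move[OF False not_stuck alice] IH by blast
  qed (rule bob_done)
  with alice show ?case ..
qed

text \<open>Whatever Bob does next, Alice can then make every vertex safe, by coloring \<open>b\<close> if it is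
still uncolored.\<close>
definition nearly_safe :: "('a \<Rightarrow> nat option) \<Rightarrow> bool" where
  "nearly_safe col \<longleftrightarrow>
     (\<exists>b\<in>V. (\<forall>v\<in>V. v \<noteq> b \<longrightarrow> safe E col v) \<and> card (seen_colors E col b) \<le> 1)"

lemma alice_wins_alice_turn_if_all_safe_but:
  assumes "\<forall>v\<in>V. v \<noteq> b \<longrightarrow> safe E col v" "b \<in> V" "col b = None"
    and "card (seen_colors E col b) \<le> 2"
  shows "alice_wins_alice_turn 3 V E col"
proof -
  obtain c where c: "legal 3 E col b c"
    using legal_color_exists[OF finite_seen_colors] assms(4) by blast
  have "\<not> complete V col" using assms(2,3) by (auto simp: complete_def)
  moreover have "alice_wins_bob_turn 3 V E (col(b := Some c))"
    using alice_wins_if_all_safe all_safe_fun_upd[OF assms(1,3)] by blast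
  ultimately show ?thesis
    using alice_move[OF _ not_stuck_if_all_safe_but[OF assms(1,4)] assms(2,3) c] by blast
qed

lemma alice_wins_bob_turn_if_nearly_safe:
  assumes "nearly_safe col"
  shows "alice_wins_bob_turn 3 V E col"
proof -
  obtain b where b: "b \<in> V" and others: "\<forall>v\<in>V. v \<noteq> b \<longrightarrow> safe E col v"
    and seen: "card (seen_colors E col b) \<le> 1"
    using assms by (auto simp: nearly_safe_def)
  show ?thesis
  proof (cases "col b = None")
    case False
    then have "\<forall>v\<in>V. safe E col v" using others by (auto simp: safe_def)
    then show ?thesis using alice_wins_if_all_safe by blast
  next
    case True
    have not_stuck: "\<not> stuck 3 V E col"
      using not_stuck_if_all_safe_but others seen by simp
    have incomplete: "\<not> complete V col" using b True by (auto simp: complete_def)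
    have pass: "alice_wins_alice_turn 3 V E col"
      using alice_wins_alice_turn_if_all_safe_but others b True seen by simp
    show ?thesis
    proof (rule bob_move[OF incomplete not_stuck pass])
      fix v c assume v: "v \<in> V" "col v = None"
      show "alice_wins_alice_turn 3 V E (col(v := Some c))"
      proof (cases "v = b")
        case True
        then show ?thesis
          using alice_wins_if_all_safe all_safe_fun_upd[OF others] v by blast
      next
        case False
        have "card (seen_colors E (col(v := Some c)) b) \<le> 2"
          using seen finite_seen_colors[of col b]
          by (auto simp: seen_colors_fun_upd[of col v, OF v(2)] card_insert_if)
        moreover have "\<forall>u\<in>V. u \<noteq> b \<longrightarrow> safe E (col(v := Some c)) u"
          using others safe_fun_upd v(2) by blast
        ultimately show ?thesis
          using alice_wins_alice_turn_if_all_safe_but b False True by simp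
      qed
    qed
  qed
qed

definition has_good_move :: "('a \<Rightarrow> nat option) \<Rightarrow> bool" where
  "has_good_move col \<longleftrightarrow>
     (\<exists>w c. w \<in> V \<and> col w = None \<and> legal 3 E col w c \<and> nearly_safe (col(w := Some c)))"

lemma alice_wins_alice_turn_if_has_good_move:
  assumes "has_good_move col" "\<not> stuck 3 V E col"
  shows "alice_wins_alice_turn 3 V E col"
proof -
  obtain w c where w: "w \<in> V" "col w = None" and c: "legal 3 E col w c"
    and good: "nearly_safe (col(w := Some c))"
    using assms(1) by (auto simp: has_good_move_def)
  have "\<not> complete V col" using w by (auto simp: complete_def)
  then show ?thesis
    using alice_move[OF _ assms(2) w c] alice_wins_bob_turn_if_nearly_safe[OF good] by blast
qed

lemma has_good_move_by_coloring:
  assumes "b \<noteq> b'" "b \<in> V" "b' \<in> V" "col b = None" "legal 3 E col b c"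
    and others: "\<forall>v\<in>V. v \<noteq> b \<longrightarrow> v \<noteq> b' \<longrightarrow> safe E col v"
    and "card (seen_colors E (col(b := Some c)) b') \<le> 1"
  shows "has_good_move col"
proof -
  have "\<forall>v\<in>V. v \<noteq> b \<longrightarrow> v \<noteq> b' \<longrightarrow> safe E (col(b := Some c)) v"
    using others safe_fun_upd assms(4) by blast
  then have "\<forall>v\<in>V. v \<noteq> b' \<longrightarrow> safe E (col(b := Some c)) v"
    by (auto simp: safe_def)
  then show ?thesis
    using assms unfolding has_good_move_def nearly_safe_def by blast
qed

lemma has_good_move_if_unseen:
  assumes "b \<noteq> b'" "b \<in> V" "b' \<in> V" "col b = None"
    and "\<forall>v\<in>V. v \<noteq> b \<longrightarrow> v \<noteq> b' \<longrightarrow> safe E col v"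
    and "card (seen_colors E col b) \<le> 2" "seen_colors E col b' = {}"
  shows "has_good_move col"
proof -
  obtain c where c: "legal 3 E col b c"
    using legal_color_exists[OF finite_seen_colors assms(6)] ..
  have "seen_colors E (col(b := Some c)) b' \<subseteq> {c}"
    using assms(7) by (simp add: seen_colors_fun_upd[of col b, OF assms(4)])
  then show ?thesis
    by (intro has_good_move_by_coloring[OF assms(1-4) c assms(5)] card_subset_singleton_le)
qed

end

locale girth5_graph = sgraph +
  assumes no_triangle: "E a b \<Longrightarrow> E b c \<Longrightarrow> E c a \<Longrightarrow> False"
    and no_square: "E a b \<Longrightarrow> E b c \<Longrightarrow> E c d \<Longrightarrow> E d a \<Longrightarrow> a \<noteq> c \<Longrightarrow> b \<noteq> d \<Longrightarrow> False"
begin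

abbreviation closed_nbhd :: "'a \<Rightarrow> 'a set" where
  "closed_nbhd v \<equiv> insert v {u. E u v}"

lemma card_closed_nbhd: "card (closed_nbhd v) = Suc (degree V E v)"
  using finite_nbhd edge_irrefl by (simp add: degree_eq)

lemma closed_nbhd_subset: "v \<in> V \<Longrightarrow> closed_nbhd v \<subseteq> V"
  by (auto dest: edge_in_V)

lemma card_closed_nbhd_Int:
  assumes "x \<noteq> y"
  shows "card (closed_nbhd x \<inter> closed_nbhd y) \<le> (if E x y then 2 else 1)"
proof (cases "E x y")
  case True
  have "closed_nbhd x \<inter> closed_nbhd y \<subseteq> {x, y}"
  proof
    fix w assume w: "w \<in> closed_nbhd x \<inter> closed_nbhd y"
    show "w \<in> {x, y}"
    proof (rule ccontr)
      assume "w \<notin> {x, y}"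
      then have "E w x" "E w y" using w by auto
      then show False using no_triangle[OF True edge_sym] by blast
    qed
  qed
  then have "card (closed_nbhd x \<inter> closed_nbhd y) \<le> card {x, y}"
    by (intro card_mono) auto
  then show ?thesis using True by (simp add: card_insert_if split: if_splits)
next
  case False
  have "card ({u. E u x} \<inter> {u. E u y}) \<le> Suc 0"
  proof (subst card_le_Suc0_iff_eq)
    show "finite ({u. E u x} \<inter> {u. E u y})" using finite_nbhd by simp
    show "\<forall>a\<in>{u. E u x} \<inter> {u. E u y}. \<forall>b\<in>{u. E u x} \<inter> {u. E u y}. a = b"
    proof (intro ballI, rule ccontr)
      fix a b assume "a \<in> {u. E u x} \<inter> {u. E u y}" "b \<in> {u. E u x} \<inter> {u. E u y}" "a \<noteq> b"
      then show False using no_square[OF edge_sym _ edge_sym, of a x y b] assms by blast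
    qed
  qed
  moreover have "closed_nbhd x \<inter> closed_nbhd y \<subseteq> {u. E u x} \<inter> {u. E u y}"
    using False assms edge_sym[of y x] by auto
  ultimately show ?thesis
    using False card_mono[OF _ \<open>closed_nbhd x \<inter> closed_nbhd y \<subseteq> _\<close>] finite_nbhd
    by (simp add: le_trans)
qed

lemma two_degrees_le_card:
  assumes "b1 \<noteq> b2" "b1 \<in> V" "b2 \<in> V"
  shows "degree V E b1 + degree V E b2 \<le> card V"
proof -
  have "card (closed_nbhd b1) + card (closed_nbhd b2)
      = card (closed_nbhd b1 \<union> closed_nbhd b2) + card (closed_nbhd b1 \<inter> closed_nbhd b2)"
    using card_Un_Int[of "closed_nbhd b1" "closed_nbhd b2"] finite_nbhd by simp
  moreover have "card (closed_nbhd b1 \<union> closed_nbhd b2) \<le> card V"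
    using card_mono[OF finite_V] closed_nbhd_subset assms(2,3) by (meson Un_least)
  moreover have "card (closed_nbhd b1 \<inter> closed_nbhd b2) \<le> 2"
    using card_closed_nbhd_Int[OF assms(1)] by (simp split: if_splits)
  ultimately show ?thesis
    by (simp add: card_closed_nbhd)
qed

lemma three_degrees_le_Suc_card:
  assumes "b1 \<noteq> b2" "b1 \<noteq> b3" "b2 \<noteq> b3" "b1 \<in> V" "b2 \<in> V" "b3 \<in> V"
  shows "degree V E b1 + degree V E b2 + degree V E b3 \<le> Suc (card V)"
proof -
  let ?N1 = "closed_nbhd b1" and ?N2 = "closed_nbhd b2" and ?N3 = "closed_nbhd b3"
  have "card (?N1 \<union> ?N2 \<union> ?N3) + card (?N1 \<inter> ?N2) + card (?N1 \<inter> ?N3) + card (?N2 \<inter> ?N3)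
      = card ?N1 + card ?N2 + card ?N3 + card (?N1 \<inter> ?N2 \<inter> ?N3)"
    by (rule card_Un_Int_3) (simp_all add: finite_nbhd)
  moreover have "card (?N1 \<union> ?N2 \<union> ?N3) \<le> card V"
    using card_mono[OF finite_V] closed_nbhd_subset assms(4-6) by (meson Un_least)
  moreover have
    "card (?N1 \<inter> ?N2) + card (?N1 \<inter> ?N3) + card (?N2 \<inter> ?N3) \<le> 4 + card (?N1 \<inter> ?N2 \<inter> ?N3)"
  proof (cases "E b1 b2 \<and> E b1 b3 \<or> E b1 b2 \<and> E b2 b3 \<or> E b1 b3 \<and> E b2 b3")
    case True
    text \<open>Without triangles this is a path on \<open>b1, b2, b3\<close>; its middle vertex is common to all three.\<close>
    have "\<not> (E b1 b2 \<and> E b1 b3 \<and> E b2 b3)"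
      using no_triangle[of b1 b2 b3] edge_sym[of b1 b3] by blast
    moreover have "?N1 \<inter> ?N2 \<inter> ?N3 \<noteq> {}"
      using True edge_sym[of b1 b2] edge_sym[of b1 b3] edge_sym[of b2 b3] by blast
    then have "1 \<le> card (?N1 \<inter> ?N2 \<inter> ?N3)"
      by (simp add: Suc_le_eq card_gt_0_iff finite_nbhd)
    ultimately show ?thesis
      using card_closed_nbhd_Int[OF assms(1)] card_closed_nbhd_Int[OF assms(2)]
        card_closed_nbhd_Int[OF assms(3)] True
      by (auto split: if_splits)
  next
    case False
    then show ?thesis
      using card_closed_nbhd_Int[OF assms(1)] card_closed_nbhd_Int[OF assms(2)]
        card_closed_nbhd_Int[OF assms(3)]
      by (auto split: if_splits)
  qed
  ultimately show ?thesis
    by (simp add: card_closed_nbhd)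
qed

lemma has_good_move_nonadjacent:
  assumes "b1 \<noteq> b2" "b1 \<in> V" "b2 \<in> V" "col b1 = None" "col b2 = None" "\<not> E b1 b2"
    and others: "\<forall>v\<in>V. v \<noteq> b1 \<longrightarrow> v \<noteq> b2 \<longrightarrow> safe E col v"
    and few: "card (colored_vertices V col) \<le> 2"
  shows "has_good_move col"
proof -
  have seen_le: "card (seen_colors E col v) \<le> 2" for v
    using card_seen_colors_le_colored_vertices few le_trans by blast
  obtain c1 c2 where c1: "legal 3 E col b1 c1" and c2: "legal 3 E col b2 c2"
    using legal_color_exists[OF finite_seen_colors seen_le] by meson
  have "\<not> E b2 b1" using assms(6) edge_sym by blast
  then have unchanged: "seen_colors E (col(b1 := Some c1)) b2 = seen_colors E col b2"
    "seen_colors E (col(b2 := Some c2)) b1 = seen_colors E col b1"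
    using assms(4-6) by (simp_all add: seen_colors_fun_upd)
  consider "card (seen_colors E col b2) \<le> 1" | "card (seen_colors E col b1) \<le> 1"
    | "card (seen_colors E col b1) = 2" "card (seen_colors E col b2) = 2"
    using seen_le by (metis Suc_1 le_SucE le_antisym)
  then show ?thesis
  proof cases
    case 1
    then show ?thesis
      using has_good_move_by_coloring[OF assms(1-4) c1 others] unchanged by simp
  next
    case 2
    have "\<forall>v\<in>V. v \<noteq> b2 \<longrightarrow> v \<noteq> b1 \<longrightarrow> safe E col v" using others by blast
    then show ?thesis
      using has_good_move_by_coloring[OF assms(1)[symmetric] assms(3,2,5) c2] 2 unchanged by simp
  next
    case 3
    text \<open>Both vertices then see both colored vertices, which closes a 4-cycle.\<close>
    have "colored_nbrs E col b = colored_vertices V col" if "card (seen_colors E col b) = 2" for b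
      using that card_seteq[OF finite_colored_vertices colored_nbrs_subset] few
        card_seen_colors_le[of col b] by simp
    with 3 have nbrs: "colored_nbrs E col b1 = colored_vertices V col"
      "colored_nbrs E col b2 = colored_vertices V col" by simp_all
    then obtain p q where "p \<in> colored_nbrs E col b1" "q \<in> colored_nbrs E col b1" "p \<noteq> q"
      using 3 card_seen_colors_le[of col b1] card_le_Suc0_iff_eq[OF finite_colored_nbrs, of col b1]
      by force
    then have "E p b1" "E p b2" "E q b1" "E q b2"
      using nbrs by (auto simp: colored_nbrs_def)
    then show ?thesis
      using no_square[of b1 p b2 q] edge_sym[of p b1] edge_sym[of q b2] assms(1) \<open>p \<noteq> q\<close>
      by blast
  qed
qed

lemma colored_nbrs_across_edge:
  assumes "E b1 b2" "E x b2" "E y b1" "colored_vertices V col = {x, y}"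
  shows "colored_nbrs E col b1 = {y}" "colored_nbrs E col b2 = {x}"
proof -
  have "\<not> E x b1" using no_triangle[OF assms(1) edge_sym[OF assms(2)]] by blast
  moreover have "\<not> E y b2" using no_triangle[OF assms(1) edge_sym assms(3)] by blast
  moreover have "colored_nbrs E col b \<subseteq> {x, y}" for b
    using assms(4) colored_nbrs_subset by blast
  moreover have "col x \<noteq> None" "col y \<noteq> None"
    using assms(4) by (auto simp: colored_vertices_def)
  ultimately show "colored_nbrs E col b1 = {y}" "colored_nbrs E col b2 = {x}"
    using assms(2,3) by (auto simp: colored_nbrs_def)
qed

lemma obtain_isolated_third_nbr:
  assumes adj: "E b1 b2" and uncolored: "col b1 = None" "col b2 = None"
    and deg: "degree V E b2 = 3" and "E x b2" "E y b1"
    and colored: "colored_vertices V col = {x, y}"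
  obtains z where "z \<in> V" "col z = None" "{u. E u b2} = {b1, x, z}" "\<not> E z b1"
    "colored_nbrs E col z = {}"
proof -
  have "col x \<noteq> None" "col y \<noteq> None"
    using colored by (auto simp: colored_vertices_def)
  have "\<not> {u. E u b2} \<subseteq> {b1, x}"
  proof
    assume "{u. E u b2} \<subseteq> {b1, x}"
    then have "card {u. E u b2} \<le> card {b1, x}" by (intro card_mono) auto
    also have "\<dots> \<le> 2" by (simp add: card_insert_if)
    finally show False using deg by (simp add: degree_eq)
  qed
  then obtain z where z: "E z b2" "z \<noteq> b1" "z \<noteq> x" by blast
  have "x \<noteq> b1" using \<open>col x \<noteq> None\<close> uncolored(1) by auto
  then have nbhd_b2: "{u. E u b2} = {b1, x, z}"
    using card_seteq[OF finite_nbhd, of "{b1, x, z}" b2] adj \<open>E x b2\<close> z deg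
    by (simp add: degree_eq edge_sym)
  have "z \<in> V" using z(1) edge_in_V by blast
  have "\<not> E z b1"
    using no_triangle[OF adj z(1)[THEN edge_sym]] by blast
  have "z \<noteq> y"
    using no_triangle[OF adj edge_sym \<open>E y b1\<close>] z(1) by blast
  then have "col z = None"
    using colored \<open>z \<in> V\<close> z(3) by (auto simp: colored_vertices_def)
  text \<open>A colored neighbour \<open>x\<close> of \<open>z\<close> would close a triangle, \<open>y\<close> a 4-cycle through \<open>b1, b2\<close>.\<close>
  have "\<not> E x z" using no_triangle[OF _ z(1) edge_sym[OF \<open>E x b2\<close>]] by blast
  moreover have "\<not> E y z"
    using no_square[OF \<open>E y b1\<close> adj edge_sym[OF z(1)]] edge_sym[of y z] z(2)
      \<open>col y \<noteq> None\<close> uncolored(2) by metis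
  ultimately have "colored_nbrs E col z = {}"
    using colored colored_nbrs_subset[of col z] by (auto simp: colored_nbrs_def)
  then show ?thesis
    using that \<open>z \<in> V\<close> \<open>col z = None\<close> nbhd_b2 \<open>\<not> E z b1\<close> by blast
qed

lemma has_good_move_adjacent_same_color:
  assumes adj: "E b1 b2" and uncolored: "col b1 = None" "col b2 = None"
    and deg: "degree V E b2 = 3"
    and x: "E x b2" "col x = Some a" and y: "E y b1" "col y = Some a" and "a < 3"
    and colored: "colored_vertices V col = {x, y}"
    and others: "\<forall>v\<in>V. v \<noteq> b1 \<longrightarrow> v \<noteq> b2 \<longrightarrow> safe E col v"
  shows "has_good_move col"
proof -
  obtain z where "z \<in> V" and z_uncolored: "col z = None" and nbhd_b2: "{u. E u b2} = {b1, x, z}"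
    and "\<not> E z b1" and isolated: "colored_nbrs E col z = {}"
    using obtain_isolated_third_nbr[OF adj uncolored deg x(1) y(1) colored] .
  have legal_z: "legal 3 E col z a"
    using isolated \<open>a < 3\<close> by (auto simp: legal_def colored_nbrs_def)
  let ?col = "col(z := Some a)"
  have "seen_colors E col b2 = {a}" "seen_colors E col b1 = {a}"
    using colored_nbrs_across_edge[OF adj x(1) y(1) colored] x(2) y(2)
    by (simp_all add: seen_colors_eq_image)
  then have seen: "seen_colors E ?col b2 = {a}" "seen_colors E ?col b1 = {a}"
    using nbhd_b2 \<open>\<not> E z b1\<close> by (auto simp: seen_colors_fun_upd[of col z, OF z_uncolored])
  have "uncolored_nbrs E ?col b2 \<subseteq> {b1}"
    using nbhd_b2 x(2) by (auto simp: uncolored_nbrs_def)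
  then have "safe E ?col b2"
    using seen(1) card_subset_singleton_le by (fastforce simp: safe_def)
  moreover have "safe E ?col v" if "v \<in> V" "v \<noteq> b1" "v \<noteq> b2" for v
    using others that safe_fun_upd z_uncolored by blast
  ultimately have "\<forall>v\<in>V. v \<noteq> b1 \<longrightarrow> safe E ?col v" by blast
  moreover have "b1 \<in> V" using adj edge_in_V by blast
  ultimately have "nearly_safe ?col"
    using seen(2) unfolding nearly_safe_def by force
  then show ?thesis
    using \<open>z \<in> V\<close> z_uncolored legal_z unfolding has_good_move_def by blast
qed

lemma has_good_move_adjacent:
  assumes adj: "E b1 b2" and uncolored: "col b1 = None" "col b2 = None"
    and deg: "degree V E b2 = 3"
    and others: "\<forall>v\<in>V. v \<noteq> b1 \<longrightarrow> v \<noteq> b2 \<longrightarrow> safe E col v"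
    and few: "card (colored_vertices V col) \<le> 2"
    and colors: "\<forall>v c. col v = Some c \<longrightarrow> c < 3"
    and seen: "seen_colors E col b1 \<noteq> {}" "seen_colors E col b2 \<noteq> {}"
  shows "has_good_move col"
proof -
  obtain y a1 where y: "E y b1" "col y = Some a1"
    using seen(1) by (auto simp: seen_colors_def)
  obtain x a2 where x: "E x b2" "col x = Some a2"
    using seen(2) by (auto simp: seen_colors_def)
  have "x \<noteq> y" using no_triangle[OF adj edge_sym[OF x(1)]] y(1) by blast
  moreover have "{x, y} \<subseteq> colored_vertices V col"
    using x y edge_in_V by (auto simp: colored_vertices_def)
  ultimately have colored: "colored_vertices V col = {x, y}"
    using card_seteq[OF finite_colored_vertices] few by (metis card_2_iff)
  have "b1 \<noteq> b2" "b1 \<in> V" "b2 \<in> V" using adj edge_irrefl edge_in_V by auto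
  have seen_b1: "seen_colors E col b1 = {a1}" and seen_b2: "seen_colors E col b2 = {a2}"
    using colored_nbrs_across_edge[OF adj x(1) y(1) colored] x(2) y(2)
    by (simp_all add: seen_colors_eq_image)
  show ?thesis
  proof (cases "a1 = a2")
    case True
    then show ?thesis
      using has_good_move_adjacent_same_color[OF adj uncolored deg x] y colors colored others
      by simp
  next
    case False
    then have "legal 3 E col b1 a2"
      using colors x(2) seen_b1 by (auto simp: legal_def seen_colors_def)
    moreover have "seen_colors E (col(b1 := Some a2)) b2 = {a2}"
      using adj seen_b2 by (simp add: seen_colors_fun_upd[of col b1, OF uncolored(1)])
    ultimately show ?thesis
      using has_good_move_by_coloring[OF \<open>b1 \<noteq> b2\<close> \<open>b1 \<in> V\<close> \<open>b2 \<in> V\<close> uncolored(1) _ others]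
      by simp
  qed
qed

lemma has_good_move_two_unsafe_degree_3:
  assumes "b1 \<noteq> b2" "b1 \<in> V" "b2 \<in> V" "col b1 = None" "col b2 = None"
    and "degree V E b2 = 3"
    and others: "\<forall>v\<in>V. v \<noteq> b1 \<longrightarrow> v \<noteq> b2 \<longrightarrow> safe E col v"
    and few: "card (colored_vertices V col) \<le> 2"
    and colors: "\<forall>v c. col v = Some c \<longrightarrow> c < 3"
  shows "has_good_move col"
proof -
  have seen_le: "card (seen_colors E col v) \<le> 2" for v
    using card_seen_colors_le_colored_vertices few le_trans by blast
  have others': "\<forall>v\<in>V. v \<noteq> b2 \<longrightarrow> v \<noteq> b1 \<longrightarrow> safe E col v"
    using others by blast
  consider "\<not> E b1 b2" | "seen_colors E col b2 = {}" | "seen_colors E col b1 = {}"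
    | "E b1 b2" "seen_colors E col b1 \<noteq> {}" "seen_colors E col b2 \<noteq> {}"
    by blast
  then show ?thesis
  proof cases
    case 1
    then show ?thesis using has_good_move_nonadjacent assms by blast
  next
    case 2
    then show ?thesis using has_good_move_if_unseen[OF assms(1-4) others seen_le] by blast
  next
    case 3
    then show ?thesis
      using has_good_move_if_unseen[OF assms(1)[symmetric] assms(3,2,5) others' seen_le] by blast
  next
    case 4
    then show ?thesis using has_good_move_adjacent assms by blast
  qed
qed

lemma has_good_move_if_two_unsafe:
  assumes "card V \<le> 7" and few: "card (colored_vertices V col) \<le> 2"
    and colors: "\<forall>v c. col v = Some c \<longrightarrow> c < 3"
    and b: "b1 \<noteq> b2" "b1 \<in> V" "b2 \<in> V" "\<not> safe E col b1" "\<not> safe E col b2"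
  shows "has_good_move col"
proof -
  note unsafe = unsafe_imp_degree_ge_3
  have others: "\<forall>v\<in>V. v \<noteq> b1 \<longrightarrow> v \<noteq> b2 \<longrightarrow> safe E col v"
  proof (intro ballI impI, rule ccontr)
    fix v assume v: "v \<in> V" "v \<noteq> b1" "v \<noteq> b2" "\<not> safe E col v"
    then have "degree V E b1 + degree V E b2 + degree V E v \<le> Suc (card V)"
      using three_degrees_le_Suc_card b(1-3) by metis
    then show False
      using unsafe(2)[OF b(4)] unsafe(2)[OF b(5)] unsafe(2)[OF v(4)] \<open>card V \<le> 7\<close> by linarith
  qed
  have "degree V E b1 = 3 \<or> degree V E b2 = 3"
    using two_degrees_le_card[OF b(1-3)] unsafe(2)[OF b(4)] unsafe(2)[OF b(5)] \<open>card V \<le> 7\<close>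
    by linarith
  then show ?thesis
  proof
    assume "degree V E b2 = 3"
    then show ?thesis
      using has_good_move_two_unsafe_degree_3[OF b(1-3) unsafe(1)[OF b(4)] unsafe(1)[OF b(5)]]
        others few colors by blast
  next
    assume "degree V E b1 = 3"
    moreover have "\<forall>v\<in>V. v \<noteq> b2 \<longrightarrow> v \<noteq> b1 \<longrightarrow> safe E col v" using others by blast
    ultimately show ?thesis
      using has_good_move_two_unsafe_degree_3[OF b(1)[symmetric] b(3,2)
          unsafe(1)[OF b(5)] unsafe(1)[OF b(4)]] few colors by blast
  qed
qed

lemma alice_wins_alice_turn_if_two_colored:
  assumes "card V \<le> 7" and few: "card (colored_vertices V col) \<le> 2"
    and colors: "\<forall>v c. col v = Some c \<longrightarrow> c < 3"
  shows "alice_wins_alice_turn 3 V E col"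
proof (cases "complete V col")
  case incomplete: False
  have not_stuck: "\<not> stuck 3 V E col"
    using few by (rule not_stuck_if_colored_vertices_le_2)
  show ?thesis
  proof (cases "\<exists>b1\<in>V. \<exists>b2\<in>V. b1 \<noteq> b2 \<and> \<not> safe E col b1 \<and> \<not> safe E col b2")
    case True
    then have "has_good_move col"
      using has_good_move_if_two_unsafe[OF assms] by blast
    then show ?thesis
      using alice_wins_alice_turn_if_has_good_move not_stuck by blast
  next
    case False
    obtain b where "\<forall>v\<in>V. v \<noteq> b \<longrightarrow> safe E col v" "b \<in> V" "col b = None"
    proof (cases "\<forall>v\<in>V. safe E col v")
      case True
      then show ?thesis
        using that incomplete by (auto simp: complete_def)
    next
      case False
      then show ?thesis
        using that unsafe_imp_degree_ge_3(1) \<open>\<not> (\<exists>b1\<in>V. _)\<close> by metis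
    qed
    moreover have "card (seen_colors E col b) \<le> 2"
      using card_seen_colors_le_colored_vertices few le_trans by blast
    ultimately show ?thesis
      by (rule alice_wins_alice_turn_if_all_safe_but)
  qed
qed (rule alice_done)

lemma alice_wins_bob_turn_if_one_colored:
  assumes "card V \<le> 7" and few: "card (colored_vertices V col) \<le> 1"
    and colors: "\<forall>v c. col v = Some c \<longrightarrow> c < 3"
  shows "alice_wins_bob_turn 3 V E col"
proof (cases "complete V col")
  case incomplete: False
  have not_stuck: "\<not> stuck 3 V E col"
    using few by (intro not_stuck_if_colored_vertices_le_2) simp
  have pass: "alice_wins_alice_turn 3 V E col"
    using alice_wins_alice_turn_if_two_colored assms by simp
  show ?thesis
  proof (rule bob_move[OF incomplete not_stuck pass])
    fix v c assume v: "v \<in> V" "col v = None" and "legal 3 E col v c"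
    then have "\<forall>u d. (col(v := Some c)) u = Some d \<longrightarrow> d < 3"
      using colors by (auto simp: legal_def)
    moreover have "colored_vertices V (col(v := Some c)) = insert v (colored_vertices V col)"
      using v by (auto simp: colored_vertices_def)
    then have "card (colored_vertices V (col(v := Some c))) \<le> 2"
      using few finite_colored_vertices by (simp add: card_insert_if)
    ultimately show "alice_wins_alice_turn 3 V E (col(v := Some c))"
      using alice_wins_alice_turn_if_two_colored \<open>card V \<le> 7\<close> by blast
  qed
qed (rule bob_done)

end

lemma tree_girth5_graph:
  assumes "is_tree V E"
  shows "girth5_graph V E"
proof -
  have "simple_graph V E" and no_cycle: "\<not> (\<exists>cs. is_cycle E cs)"
    using assms by (auto simp: is_tree_def)
  then interpret sgraph V E by unfold_locales
  show ?thesis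
  proof unfold_locales
    fix a b c assume "E a b" "E b c" "E c a"
    then have "is_cycle E [a, b, c]"
      using edge_irrefl by (auto simp: is_cycle_def less_Suc_eq nth_Cons')
    then show False using no_cycle by blast
  next
    fix a b c d assume "E a b" "E b c" "E c d" "E d a" "a \<noteq> c" "b \<noteq> d"
    then have "is_cycle E [a, b, c, d]"
      using edge_irrefl by (auto simp: is_cycle_def less_Suc_eq nth_Cons')
    then show False using no_cycle by blast
  qed
qed

theorem lemma5p4:
  fixes V :: "'a set" and E :: "'a \<Rightarrow> 'a \<Rightarrow> bool" and col :: "'a \<Rightarrow> nat option"
  assumes "is_tree V E"
    and "partial_coloring 3 V E col"
    and "\<forall>v \<in> colored_vertices V col. is_leaf V E v"
    and "card (colored_vertices V col) \<le> 1"
    and "card V \<le> 7"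
  shows "alice_wins_MCG 3 V E col"
proof -
  interpret girth5_graph V E
    using assms(1) by (rule tree_girth5_graph)
  have "\<forall>v c. col v = Some c \<longrightarrow> c < 3"
    using assms(2) by (simp add: partial_coloring_def)
  then show ?thesis
    unfolding alice_wins_MCG_def
    using alice_wins_bob_turn_if_one_colored assms(4,5) by blast
qed

end
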